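(* If $V$ is a simple abelian intertwining algebra associated to an abelian group $A$ with normalized abelian $3$-cocycle $(F,\Omega)$, then the $V^0$-modules $V^\alpha$ are simple for all $\alpha\in A$. In particular, $V^0$ is a simple vertex operator algebra.
   Context: Normalized abelian $3$-cocycle: $F:A^3\to\mathbb C^\times$, $\Omega:A^2\to\mathbb C^\times$ with $F(\alpha_1,\alpha_2,\alpha_3)F(\alpha_1,\alpha_2+\alpha_3,\alpha_4)F(\alpha_2,\alpha_3,\alpha_4)=F(\alpha_1,\alpha_2,\alpha_3+\alpha_4)F(\alpha_1+\alpha_2,\alpha_3,\alpha_4)$, $F(\alpha_1,\alpha_2,\alpha_3)\Omega(\alpha_1+\alpha_2,\alpha_3)F(\alpha_3,\alpha_1,\alpha_2)=\Omega(\alpha_2,\alpha_3)F(\alpha_1,\alpha_3,\alpha_2)\Omega(\alpha_1,\alpha_3)$, $F(\alpha_1,\alpha_2,\alpha_3)^{-1}\Omega(\alpha_1,\alpha_2+\alpha_3)F(\alpha_2,\alpha_3,\alpha_1)^{-1}=\Omega(\alpha_1,\alpha_2)F(\alpha_2,\alpha_1,\alpha_3)^{-1}\Omega(\alpha_1,\alpha_3)$, and $F=1$ if an argument is $0$. Fix $\hat b$ with $e^{2\pi i\hat b(\alpha_1,\alpha_2)}=\Omega(\alpha_1,\alpha_2)\Omega(\alpha_2,\alpha_1)$, $B(\alpha_1,\alpha_2,\alpha_3)=F(\alpha_1,\alpha_2,\alpha_3)\Omega(\alpha_1,\alpha_2)F(\alpha_2,\alpha_1,\alpha_3)^{-1}$.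 An abelian intertwining algebra associated to $(A,F,\Omega)$: $A\times\mathbb C$-graded $V=\bigoplus V^\alpha_{(n)}$ (for each $\alpha$ and $R\in\mathbb R$, $V^\alpha_{(n)}=0$ for all but finitely many $n$ with $\mathrm{Re}\,n\le R$), $Y(v,x)=\sum_{n\in\mathbb C}v_nx^{-n-1}$, $\mathbf 1\in V^0_{(0)}$, $\omega\in V^0_{(2)}$, with $x^{\hat b(\alpha_1,\alpha_2)}Y(v_1,x)v_2\in V^{\alpha_1+\alpha_2}((x))$ for $v_i\in V^{\alpha_i}$; $Y(\mathbf 1,x)=\mathrm{id}$, $Y(v,x)\mathbf 1\in V[[x]]$ with constant term $v$; Jacobi identity $x_0^{-1}\big(\tfrac{x_1-x_2}{x_0}\big)^{\hat b(\alpha_1,\alpha_2)}\delta\big(\tfrac{x_1-x_2}{x_0}\big)Y(v_1,x_1)Y(v_2,x_2)v_3-B(\alpha_1,\alpha_2,\alpha_3)x_0^{-1}\big(\tfrac{x_2-x_1}{e^{\pi i}x_0}\big)^{\hat b(\alpha_1,\alpha_2)}\delta\big(\tfrac{x_2-x_1}{-x_0}\big)Y(v_2,x_2)Y(v_1,x_1)v_3=F(\alpha_1,\alpha_2,\alpha_3)x_1^{-1}\big(\tfrac{x_2+x_0}{x_1}\big)^{\hat b(\alpha_1,\alpha_3)}\delta\big(\tfrac{x_2+x_0}{x_1}\big)Y(Y(v_1,x_0)v_2,x_2)v_3$; $Y(\omega,x)=\sum L(n)x^{-n-2}$ satisfies the Virasoro relations and $V_{(n)}=\bigoplus_\alpha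 V^\alpha_{(n)}$ is the $L(0)$-eigenspace of eigenvalue $n$; $Y(L(-1)v,x)=\frac{d}{dx}Y(v,x)$. $V^\alpha=\bigoplus_nV^\alpha_{(n)}$; $V^0$ is a vertex operator algebra and each $V^\alpha$ a $V^0$-module. $V$ is simple if the only $A$-graded subspaces closed under all $v_n$, $v\in V$, $n\in\mathbb C$, are $0$ and $V$. *)

theory Defs
  imports "HOL-Analysis.Analysis"
begin

text \<open>Complex vector spaces are modelled by the locale module with scalar
multiplication sc :: complex => 'v => 'v; the whole space V is UNIV :: 'v set.\<close>

definition normalized_abelian_3_cocycle ::
  "('a::ab_group_add \<Rightarrow> 'a \<Rightarrow> 'a \<Rightarrow> complex) \<Rightarrow> ('a \<Rightarrow> 'a \<Rightarrow> complex) \<Rightarrow> bool" where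
  "normalized_abelian_3_cocycle F \<Omega> \<longleftrightarrow>
     (\<forall>a b c. F a b c \<noteq> 0) \<and> (\<forall>a b. \<Omega> a b \<noteq> 0) \<and>
     (\<forall>a1 a2 a3 a4.
        F a1 a2 a3 * F a1 (a2 + a3) a4 * F a2 a3 a4
          = F a1 a2 (a3 + a4) * F (a1 + a2) a3 a4) \<and>
     (\<forall>a1 a2 a3.
        F a1 a2 a3 * \<Omega> (a1 + a2) a3 * F a3 a1 a2
          = \<Omega> a2 a3 * F a1 a3 a2 * \<Omega> a1 a3) \<and>
     (\<forall>a1 a2 a3.
        inverse (F a1 a2 a3) * \<Omega> a1 (a2 + a3) * inverse (F a2 a3 a1)
          = \<Omega> a1 a2 * inverse (F a2 a1 a3) * \<Omega> a1 a3) \<and>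
     (\<forall>a b. F 0 a b = 1 \<and> F a 0 b = 1 \<and> F a b 0 = 1)"

definition Bfun ::
  "('a \<Rightarrow> 'a \<Rightarrow> 'a \<Rightarrow> complex) \<Rightarrow> ('a \<Rightarrow> 'a \<Rightarrow> complex) \<Rightarrow> 'a \<Rightarrow> 'a \<Rightarrow> 'a \<Rightarrow> complex" where
  "Bfun F \<Omega> a1 a2 a3 = F a1 a2 a3 * \<Omega> a1 a2 * inverse (F a2 a1 a3)"

text \<open>Sum over the (finite) support of a function nat => 'v.  In the Jacobi identity
all these sums have finite support by the truncation axiom.\<close>
definition fsum :: "(nat \<Rightarrow> 'v::ab_group_add) \<Rightarrow> 'v" where
  "fsum f = (\<Sum>k\<in>{k. f k \<noteq> 0}. f k)"

definition internal_direct_sum :: "(complex \<Rightarrow> 'v::ab_group_add \<Rightarrow> 'v) \<Rightarrow> ('i \<Rightarrow> 'v set) \<Rightarrow> bool" where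
  "internal_direct_sum sc G \<longleftrightarrow>
     (\<forall>i. module.subspace sc (G i)) \<and>
     (\<forall>v. \<exists>I u. finite I \<and> (\<forall>i\<in>I. u i \<in> G i) \<and> v = (\<Sum>i\<in>I. u i)) \<and>
     (\<forall>I u. finite I \<longrightarrow> (\<forall>i\<in>I. u i \<in> G i) \<longrightarrow> (\<Sum>i\<in>I. u i) = 0 \<longrightarrow> (\<forall>i\<in>I. u i = 0))"

definition Vpart :: "(complex \<Rightarrow> 'v::ab_group_add \<Rightarrow> 'v) \<Rightarrow> ('a \<Rightarrow> complex \<Rightarrow> 'v set) \<Rightarrow> 'a \<Rightarrow> 'v set" where
  "Vpart sc Vg a = module.span sc (\<Union>n. Vg a n)"

definition A_graded_subspace :: "(complex \<Rightarrow> 'v::ab_group_add \<Rightarrow> 'v) \<Rightarrow> ('a \<Rightarrow> complex \<Rightarrow> 'v set) \<Rightarrow> 'v set \<Rightarrow> bool" where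
  "A_graded_subspace sc Vg W \<longleftrightarrow> module.subspace sc W \<and>
     (\<forall>w\<in>W. \<exists>I u. finite I \<and> (\<forall>a\<in>I. u a \<in> W \<inter> Vpart sc Vg a) \<and> w = (\<Sum>a\<in>I. u a))"

text \<open>Abelian intertwining algebra associated to (A,F,Omega), with fixed bhat.
  mode v n w is v_n w, where Y(v,x) w = sum_n (v_n w) x^(-n-1).
  The Jacobi identity is stated coefficientwise: the coefficient of
  x0^(-n-b-1) x1^(-r-1) x2^(-s-1)  (n integer, r s complex) of each term,
  where b = bhat a1 a2, c = bhat a1 a3 (all x0-exponents occurring lie in -b-1+Z
  by the truncation axiom).\<close>
definition abelian_intertwining_algebra ::
  "(complex \<Rightarrow> 'v::ab_group_add \<Rightarrow> 'v) \<Rightarrow> ('a::ab_group_add \<Rightarrow> complex \<Rightarrow> 'v set)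
   \<Rightarrow> ('v \<Rightarrow> complex \<Rightarrow> 'v \<Rightarrow> 'v) \<Rightarrow> 'v \<Rightarrow> 'v
   \<Rightarrow> ('a \<Rightarrow> 'a \<Rightarrow> 'a \<Rightarrow> complex) \<Rightarrow> ('a \<Rightarrow> 'a \<Rightarrow> complex) \<Rightarrow> ('a \<Rightarrow> 'a \<Rightarrow> complex) \<Rightarrow> bool" where
  "abelian_intertwining_algebra sc Vg mode vac \<omega> F \<Omega> bhat \<longleftrightarrow>
     module sc \<and>
     normalized_abelian_3_cocycle F \<Omega> \<and>
     (\<forall>a1 a2. exp (2 * pi * \<i> * bhat a1 a2) = \<Omega> a1 a2 * \<Omega> a2 a1) \<and>
     \<comment> \<open>grading\<close>
     internal_direct_sum sc (\<lambda>(a, n). Vg a n) \<and>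
     (\<forall>a (R::real). finite {n. Re n \<le> R \<and> Vg a n \<noteq> {0}}) \<and>
     \<comment> \<open>vertex operators are bilinear\<close>
     (\<forall>v n. module_hom sc sc (mode v n)) \<and>
     (\<forall>v w n u. mode (v + w) n u = mode v n u + mode w n u) \<and>
     (\<forall>c v n u. mode (sc c v) n u = sc c (mode v n u)) \<and>
     \<comment> \<open>truncation: x^bhat(a1,a2) Y(v1,x) v2 in V^(a1+a2)((x))\<close>
     (\<forall>a1 a2 v1 v2. v1 \<in> Vpart sc Vg a1 \<longrightarrow> v2 \<in> Vpart sc Vg a2 \<longrightarrow>
        (\<forall>p. mode v1 p v2 \<in> Vpart sc Vg (a1 + a2)) \<and>
        (\<forall>p. mode v1 p v2 \<noteq> 0 \<longrightarrow> p - bhat a1 a2 \<in> \<int>) \<and>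
        (\<exists>N::real. \<forall>p. N < Re p \<longrightarrow> mode v1 p v2 = 0)) \<and>
     \<comment> \<open>vacuum\<close>
     vac \<in> Vg 0 0 \<and>
     (\<forall>n u. mode vac n u = (if n = -1 then u else 0)) \<and>
     (\<forall>v n. (\<nexists>k::nat. n = - of_nat k - 1) \<longrightarrow> mode v n vac = 0) \<and>
     (\<forall>v. mode v (-1) vac = v) \<and>
     \<comment> \<open>Jacobi identity\<close>
     (\<forall>a1 a2 a3 v1 v2 v3 (n::int) r s.
        v1 \<in> Vpart sc Vg a1 \<longrightarrow> v2 \<in> Vpart sc Vg a2 \<longrightarrow> v3 \<in> Vpart sc Vg a3 \<longrightarrow>
        (let b = bhat a1 a2; c = bhat a1 a3 in
          fsum (\<lambda>k. sc (((of_int n + b) gchoose k) * (-1) ^ k)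
                       (mode v1 (r + of_int n + b - of_nat k) (mode v2 (s + of_nat k) v3)))
          - sc (Bfun F \<Omega> a1 a2 a3 * exp (- pi * \<i> * (of_int n + b)))
              (fsum (\<lambda>k. sc (((of_int n + b) gchoose k) * (-1) ^ k)
                       (mode v2 (s + of_int n + b - of_nat k) (mode v1 (r + of_nat k) v3))))
          = (if r - c \<in> \<int> then
               sc (F a1 a2 a3)
                 (fsum (\<lambda>j. sc (r gchoose j)
                     (mode (mode v1 (of_int n + b + of_nat j) v2) (s + r - of_nat j) v3)))
             else 0))) \<and>
     \<comment> \<open>conformal vector: L(m) = omega_(m+1)\<close>
     \<omega> \<in> Vg 0 2 \<and>
     (\<exists>cc::complex. \<forall>(m::int) (k::int) u.
        mode \<omega> (of_int m + 1) (mode \<omega> (of_int k + 1) u)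
        - mode \<omega> (of_int k + 1) (mode \<omega> (of_int m + 1) u)
        = sc (of_int (m - k)) (mode \<omega> (of_int (m + k) + 1) u)
          + (if m + k = 0 then sc ((of_int m ^ 3 - of_int m) / 12 * cc) u else 0)) \<and>
     (\<forall>n. {v. mode \<omega> 1 v = sc n v} = module.span sc (\<Union>a. Vg a n)) \<and>
     \<comment> \<open>L(-1)-derivative property: Y(L(-1)v,x) = d/dx Y(v,x)\<close>
     (\<forall>v m u. mode (mode \<omega> 0 v) m u = sc (- m) (mode v (m - 1) u))"

definition simple_AIA :: "(complex \<Rightarrow> 'v::ab_group_add \<Rightarrow> 'v) \<Rightarrow> ('a \<Rightarrow> complex \<Rightarrow> 'v set)
   \<Rightarrow> ('v \<Rightarrow> complex \<Rightarrow> 'v \<Rightarrow> 'v) \<Rightarrow> bool" where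
  "simple_AIA sc Vg mode \<longleftrightarrow>
     (\<forall>W. A_graded_subspace sc Vg W \<longrightarrow> (\<forall>v n w. w \<in> W \<longrightarrow> mode v n w \<in> W)
          \<longrightarrow> W = {0} \<or> W = UNIV)"

definition simple_V0_module :: "(complex \<Rightarrow> 'v::ab_group_add \<Rightarrow> 'v) \<Rightarrow> ('a::ab_group_add \<Rightarrow> complex \<Rightarrow> 'v set)
   \<Rightarrow> ('v \<Rightarrow> complex \<Rightarrow> 'v \<Rightarrow> 'v) \<Rightarrow> 'a \<Rightarrow> bool" where
  "simple_V0_module sc Vg mode a \<longleftrightarrow>
     (\<forall>U. module.subspace sc U \<longrightarrow> U \<subseteq> Vpart sc Vg a \<longrightarrow>
          (\<forall>v\<in>Vpart sc Vg 0. \<forall>n. \<forall>u\<in>U. mode v n u \<in> U)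
          \<longrightarrow> U = {0} \<or> U = Vpart sc Vg a)"

end

theory Submission
  imports Defs
begin

(* Let U be a nonzero V^0-submodule of V^alpha and W the span of all v_n u with v in V and
  u in U. W is A-graded, its (beta + alpha)-component being spanned by V^beta . U, and it
  contains U = 1_(-1) U. W is closed under all modes: the Jacobi identity, taken at a large
  power of x_0, writes z_m x_s u as a combination of iterates (z_j x)_q u and of terms
  z_m' x_(s+k) u with k > 0, and the latter are handled by induction on s downward from the
  truncation bound of x on u. Simplicity forces W = V, and comparing alpha-components gives
  V^alpha = V^0 . U = U. *)

lemma (in module) span_UN_subspaces:
  assumes "\<And>a. subspace (G a)"
  shows "span (\<Union>a. G a) = {sum g I | I g. finite I \<and> (\<forall>a\<in>I. g a \<in> G a)}"
proof (intro subset_antisym subsetI)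
  fix y assume "y \<in> span (\<Union>a. G a)"
  then obtain t r where t: "finite t" "t \<subseteq> (\<Union>a. G a)" and y: "y = (\<Sum>v\<in>t. scale (r v) v)"
    unfolding span_explicit by blast
  then obtain idx where idx: "\<forall>v\<in>t. v \<in> G (idx v)" by (metis UN_iff subset_iff)
  define g where "g a = (\<Sum>v\<in>{v \<in> t. idx v = a}. scale (r v) v)" for a
  have "y = sum g (idx ` t)"
    unfolding y g_def using t(1) by (rule sum.image_gen)
  moreover have "g a \<in> G a" for a
    unfolding g_def using idx assms by (auto intro!: subspace_sum subspace_scale)
  ultimately show "y \<in> {sum g I | I g. finite I \<and> (\<forall>a\<in>I. g a \<in> G a)}"
    using t(1) by blast
next
  fix y assume "y \<in> {sum g I | I g. finite I \<and> (\<forall>a\<in>I. g a \<in> G a)}"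
  then obtain I g where "y = sum g I" "\<forall>a\<in>I. g a \<in> G a" by blast
  then show "y \<in> span (\<Union>a. G a)" by (blast intro: span_sum span_base)
qed

lemma (in module) fsum_head_in_subspace:
  assumes T: "subspace T" and fin: "finite {k. f k \<noteq> 0}"
    and sum_in: "fsum f \<in> T" and tail_in: "\<And>k. k \<noteq> 0 \<Longrightarrow> f k \<in> T"
  shows "f 0 \<in> T"
proof -
  have "fsum f = sum f (insert 0 {k. f k \<noteq> 0})"
    unfolding fsum_def using fin by (intro sum.mono_neutral_left) auto
  also have "\<dots> = f 0 + sum f ({k. f k \<noteq> 0} - {0})"
    using fin by (rule sum.insert_remove)
  finally have "f 0 = fsum f - sum f ({k. f k \<noteq> 0} - {0})"
    by (simp add: algebra_simps)
  also have "\<dots> \<in> T"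
    using T sum_in tail_in by (intro subspace_diff subspace_sum) auto
  finally show ?thesis .
qed

locale intertwining_algebra =
  fixes sc :: "complex \<Rightarrow> 'v::ab_group_add \<Rightarrow> 'v"
    and Vg :: "'a::ab_group_add \<Rightarrow> complex \<Rightarrow> 'v set"
    and mode :: "'v \<Rightarrow> complex \<Rightarrow> 'v \<Rightarrow> 'v"
    and vac \<omega> :: 'v
    and F :: "'a \<Rightarrow> 'a \<Rightarrow> 'a \<Rightarrow> complex"
    and \<Omega> bhat :: "'a \<Rightarrow> 'a \<Rightarrow> complex"
  assumes AIA: "abelian_intertwining_algebra sc Vg mode vac \<omega> F \<Omega> bhat"
begin

sublocale module sc
  using AIA unfolding abelian_intertwining_algebra_def by blast

lemma mode_hom: "module_hom sc sc (mode v n)"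
  using AIA unfolding abelian_intertwining_algebra_def by simp

lemma mode_add_left: "mode (v + w) n u = mode v n u + mode w n u"
  using AIA unfolding abelian_intertwining_algebra_def by simp

lemma mode_scale_left: "mode (sc c v) n u = sc c (mode v n u)"
  using AIA unfolding abelian_intertwining_algebra_def by simp

lemma Vg_direct_sum: "internal_direct_sum sc (\<lambda>(a, n). Vg a n)"
  using AIA unfolding abelian_intertwining_algebra_def by blast

lemma subspace_Vg: "subspace (Vg a n)"
  using Vg_direct_sum[unfolded internal_direct_sum_def, THEN conjunct1, rule_format, of "(a, n)"]
  by simp

lemma Vg_spanning: "\<exists>I u. finite I \<and> (\<forall>i\<in>I. u i \<in> (\<lambda>(a, n). Vg a n) i) \<and> v = sum u I"
  using Vg_direct_sum[unfolded internal_direct_sum_def, THEN conjunct2, THEN conjunct1] by (rule spec)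

lemma Vg_independent:
  assumes "finite I" "\<forall>i\<in>I. u i \<in> (\<lambda>(a, n). Vg a n) i" "sum u I = 0"
  shows "\<forall>i\<in>I. u i = 0"
  using Vg_direct_sum[unfolded internal_direct_sum_def, THEN conjunct2, THEN conjunct2] assms
  by blast

lemma
  assumes "v1 \<in> Vpart sc Vg a1" "v2 \<in> Vpart sc Vg a2"
  shows mode_Vpart: "mode v1 p v2 \<in> Vpart sc Vg (a1 + a2)"
    and mode_truncation: "\<exists>N::real. \<forall>p. N < Re p \<longrightarrow> mode v1 p v2 = 0"
  using AIA assms unfolding abelian_intertwining_algebra_def by simp_all

lemma vacuum_in_Vg: "vac \<in> Vg 0 0"
  using AIA unfolding abelian_intertwining_algebra_def by blast

lemma mode_vacuum: "mode vac (-1) u = u"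
  using AIA unfolding abelian_intertwining_algebra_def by simp

lemma jacobi:
  assumes "v1 \<in> Vpart sc Vg a1" "v2 \<in> Vpart sc Vg a2" "v3 \<in> Vpart sc Vg a3"
  shows "fsum (\<lambda>k. sc (((of_int n + bhat a1 a2) gchoose k) * (-1) ^ k)
                       (mode v1 (r + of_int n + bhat a1 a2 - of_nat k) (mode v2 (s + of_nat k) v3)))
          - sc (Bfun F \<Omega> a1 a2 a3 * exp (- pi * \<i> * (of_int n + bhat a1 a2)))
              (fsum (\<lambda>k. sc (((of_int n + bhat a1 a2) gchoose k) * (-1) ^ k)
                       (mode v2 (s + of_int n + bhat a1 a2 - of_nat k) (mode v1 (r + of_nat k) v3))))
          = (if r - bhat a1 a3 \<in> \<int> then
               sc (F a1 a2 a3)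
                 (fsum (\<lambda>j. sc (r gchoose j)
                     (mode (mode v1 (of_int n + bhat a1 a2 + of_nat j) v2) (s + r - of_nat j) v3)))
             else 0)"
  using AIA assms unfolding abelian_intertwining_algebra_def Let_def by blast

lemma mode_zero_right [simp]: "mode v n 0 = 0"
  using module_hom.zero[OF mode_hom] .

lemma mode_zero_left [simp]: "mode 0 n u = 0"
  using mode_add_left[of 0 0 n u] by simp

lemma subspace_mode_right: "subspace T \<Longrightarrow> subspace {w. mode v n w \<in> T}"
  using module_hom.subspace_vimage[OF mode_hom] by (simp add: vimage_def)

lemma subspace_mode_left: "subspace T \<Longrightarrow> subspace {v. mode v n w \<in> T}"
  unfolding subspace_def by (simp add: mode_add_left mode_scale_left)

lemma subspace_Vpart: "subspace (Vpart sc Vg a)"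
  unfolding Vpart_def by simp

lemma Vg_subset_Vpart: "Vg a n \<subseteq> Vpart sc Vg a"
  unfolding Vpart_def by (blast intro: span_base)

lemma span_Vpart_eq_UNIV: "span (\<Union>a. Vpart sc Vg a) = UNIV"
proof (intro subset_antisym subset_UNIV subsetI)
  fix v
  obtain I u where I: "\<forall>i\<in>I. u i \<in> (\<lambda>(a, n). Vg a n) i" and v: "v = sum u I"
    using Vg_spanning[of v] by blast
  have "u i \<in> span (\<Union>a. Vpart sc Vg a)" if "i \<in> I" for i
  proof -
    have "u i \<in> Vpart sc Vg (fst i)"
      using I that by (cases i) (auto intro: subsetD[OF Vg_subset_Vpart])
    then show ?thesis by (rule span_base[OF UN_I[OF UNIV_I]])
  qed
  then show "v \<in> span (\<Union>a. Vpart sc Vg a)"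
    unfolding v by (rule span_sum)
qed

lemma Vpart_independent:
  assumes "finite I" "\<forall>a\<in>I. p a \<in> Vpart sc Vg a" "sum p I = 0"
  shows "\<forall>a\<in>I. p a = 0"
proof -
  have "\<forall>a\<in>I. \<exists>J q. finite J \<and> (\<forall>n\<in>J. q n \<in> Vg a n) \<and> p a = sum q J"
    using assms(2) unfolding Vpart_def span_UN_subspaces[OF subspace_Vg] by blast
  then obtain J q where
    Jq: "\<forall>a\<in>I. finite (J a) \<and> (\<forall>n\<in>J a. q a n \<in> Vg a n) \<and> p a = sum (q a) (J a)"
    by metis
  have "sum (\<lambda>(a, n). q a n) (Sigma I J) = sum p I"
    using Jq assms(1) by (simp add: sum.Sigma[symmetric])
  moreover have "finite (Sigma I J)" "\<forall>i\<in>Sigma I J. (\<lambda>(a, n). q a n) i \<in> (\<lambda>(a, n). Vg a n) i"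
    using Jq assms(1) by auto
  ultimately have "\<forall>i\<in>Sigma I J. (\<lambda>(a, n). q a n) i = 0"
    using Vg_independent assms(3) by simp
  then show ?thesis using Jq by auto
qed

lemma Vpart_component:
  assumes "finite I" "\<forall>a\<in>I. g a \<in> Vpart sc Vg a" "sum g I \<in> Vpart sc Vg \<alpha>"
  shows "sum g I = (if \<alpha> \<in> I then g \<alpha> else 0)"
proof -
  define p where "p a = (if a \<in> I then g a else 0) - (if a = \<alpha> then sum g I else 0)" for a
  have "sum p (insert \<alpha> I) = 0"
    using assms(1) unfolding p_def sum_subtractf
    by (simp add: sum.If_cases Int_insert_left insert_absorb)
  moreover have "\<forall>a\<in>insert \<alpha> I. p a \<in> Vpart sc Vg a"
    using assms subspace_Vpart unfolding p_def by (auto intro!: subspace_diff subspace_0 subspace_neg)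
  ultimately have "p \<alpha> = 0"
    using Vpart_independent[of "insert \<alpha> I" p] assms(1) by blast
  then show ?thesis unfolding p_def by (simp split: if_splits)
qed

lemma jacobi_first_sum_in_subspace:
  assumes z: "z \<in> Vpart sc Vg \<gamma>" and x: "x \<in> Vpart sc Vg \<beta>" and u: "u \<in> Vpart sc Vg \<alpha>"
    and T: "subspace T" and gen: "\<And>y q. y \<in> Vpart sc Vg (\<gamma> + \<beta>) \<Longrightarrow> mode y q u \<in> T"
    and vanish: "\<And>k. mode z (r + of_nat k) u = 0"
  shows "fsum (\<lambda>k. sc (((of_int n + bhat \<gamma> \<beta>) gchoose k) * (-1) ^ k)
             (mode z (r + of_int n + bhat \<gamma> \<beta> - of_nat k) (mode x (s + of_nat k) u))) \<in> T"
proof -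
  have "fsum (\<lambda>k. sc (((of_int n + bhat \<gamma> \<beta>) gchoose k) * (-1) ^ k)
          (mode x (s + of_int n + bhat \<gamma> \<beta> - of_nat k) (mode z (r + of_nat k) u))) = 0"
    by (simp add: vanish fsum_def)
  moreover have "fsum (\<lambda>j. sc (r gchoose j)
          (mode (mode z (of_int n + bhat \<gamma> \<beta> + of_nat j) x) (s + r - of_nat j) u)) \<in> T"
    unfolding fsum_def using T by (intro subspace_sum subspace_scale gen mode_Vpart[OF z x])
  ultimately show ?thesis
    using jacobi[OF z x u, of n r s] T by (simp add: subspace_0 subspace_scale split: if_splits)
qed

text \<open>With n so large that z_(r+k) u = 0 for all k, the second sum of the Jacobi identity
  vanishes; the k = 0 term of the first sum is z_m x_s u, and the others involve x_(s+k) u with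
  k > 0.\<close>
lemma mode_mode_in_subspace_step:
  assumes T: "subspace T"
    and z: "z \<in> Vpart sc Vg \<gamma>" and x: "x \<in> Vpart sc Vg \<beta>" and u: "u \<in> Vpart sc Vg \<alpha>"
    and gen: "\<And>y q. y \<in> Vpart sc Vg (\<gamma> + \<beta>) \<Longrightarrow> mode y q u \<in> T"
    and Nx: "\<forall>p. Nx < Re p \<longrightarrow> mode x p u = 0"
    and higher: "\<And>k m. k \<noteq> 0 \<Longrightarrow> mode z m (mode x (s + of_nat k) u) \<in> T"
  shows "mode z m (mode x s u) \<in> T"
proof -
  obtain Nz where Nz: "\<forall>p. Nz < Re p \<longrightarrow> mode z p u = 0" using mode_truncation[OF z u] by blast
  define b where "b = bhat \<gamma> \<beta>"
  define n :: int where "n = \<lfloor>Re (m - b) - Nz\<rfloor> - 1"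
  define r where "r = m - of_int n - b"
  define f where "f k = sc (((of_int n + b) gchoose k) * (-1) ^ k)
      (mode z (r + of_int n + b - of_nat k) (mode x (s + of_nat k) u))" for k
  have "real_of_int n \<le> Re (m - b) - Nz - 1"
    unfolding n_def by linarith
  then have "Nz < Re (r + of_nat k)" for k
    unfolding r_def by simp
  then have vanish: "mode z (r + of_nat k) u = 0" for k
    using Nz by blast
  have fin: "finite {k. f k \<noteq> 0}"
  proof (rule finite_subset)
    show "{k. f k \<noteq> 0} \<subseteq> {..nat \<lceil>Nx - Re s\<rceil>}"
    proof
      fix k assume "k \<in> {k. f k \<noteq> 0}"
      then have "mode x (s + of_nat k) u \<noteq> 0" unfolding f_def by auto
      then have "Re s + real k \<le> Nx" using Nx by force
      then show "k \<in> {..nat \<lceil>Nx - Re s\<rceil>}" by simp linarith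
    qed
  qed simp
  have "fsum f \<in> T"
    unfolding f_def b_def by (rule jacobi_first_sum_in_subspace[OF z x u T]) (fact gen, fact vanish)
  moreover have "f k \<in> T" if "k \<noteq> 0" for k
    unfolding f_def using higher[OF that] T by (simp add: subspace_scale)
  ultimately have "f 0 \<in> T" by (rule fsum_head_in_subspace[OF T fin])
  then show ?thesis unfolding f_def r_def by simp
qed

lemma mode_mode_in_subspace:
  assumes T: "subspace T"
    and z: "z \<in> Vpart sc Vg \<gamma>" and x: "x \<in> Vpart sc Vg \<beta>" and u: "u \<in> Vpart sc Vg \<alpha>"
    and gen: "\<And>y q. y \<in> Vpart sc Vg (\<gamma> + \<beta>) \<Longrightarrow> mode y q u \<in> T"
  shows "mode z m (mode x s u) \<in> T"
proof -
  obtain Nx where Nx: "\<forall>p. Nx < Re p \<longrightarrow> mode x p u = 0" using mode_truncation[OF x u] by blast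
  have "\<forall>s m. Nx - real d < Re s \<longrightarrow> mode z m (mode x s u) \<in> T" for d
  proof (induction d)
    case 0
    then show ?case using Nx T by (simp add: subspace_0)
  next
    case (Suc d)
    show ?case
    proof (intro allI impI)
      fix s m assume "Nx - real (Suc d) < Re s"
      then have higher: "mode z m' (mode x (s + of_nat k) u) \<in> T" if "k \<noteq> 0" for k m'
        using Suc.IH that by simp
      show "mode z m (mode x s u) \<in> T"
        by (rule mode_mode_in_subspace_step) (fact T z x u gen Nx higher)+
    qed
  qed
  moreover have "Nx - real (nat \<lceil>Nx - Re s\<rceil> + 1) < Re s" by linarith
  ultimately show ?thesis by blast
qed

definition generated_part :: "'v set \<Rightarrow> 'a \<Rightarrow> 'a \<Rightarrow> 'v set" where
  "generated_part U \<alpha> a = span {mode x n u | x n u. x \<in> Vpart sc Vg (a - \<alpha>) \<and> u \<in> U}"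

definition generated_submodule :: "'v set \<Rightarrow> 'a \<Rightarrow> 'v set" where
  "generated_submodule U \<alpha> = span (\<Union>a. generated_part U \<alpha> a)"

lemma subspace_generated_part: "subspace (generated_part U \<alpha> a)"
  unfolding generated_part_def by simp

lemma generated_part_subset_Vpart:
  assumes "U \<subseteq> Vpart sc Vg \<alpha>"
  shows "generated_part U \<alpha> a \<subseteq> Vpart sc Vg a"
proof -
  have "mode x n u \<in> Vpart sc Vg a" if "x \<in> Vpart sc Vg (a - \<alpha>)" "u \<in> U" for x n u
    using mode_Vpart[OF that(1) subsetD[OF assms that(2)]] by simp
  then show ?thesis
    unfolding generated_part_def by (intro span_minimal subspace_Vpart) blast
qed

lemma subset_generated_part_self: "U \<subseteq> generated_part U \<alpha> \<alpha>"
proof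
  fix u assume "u \<in> U"
  moreover have "vac \<in> Vpart sc Vg (\<alpha> - \<alpha>)"
    using vacuum_in_Vg Vg_subset_Vpart by auto
  ultimately have "mode vac (-1) u \<in> generated_part U \<alpha> \<alpha>"
    unfolding generated_part_def by (blast intro: span_base)
  then show "u \<in> generated_part U \<alpha> \<alpha>" by (simp add: mode_vacuum)
qed

lemma generated_part_self_subset:
  assumes "subspace U" and "\<forall>v\<in>Vpart sc Vg 0. \<forall>n. \<forall>u\<in>U. mode v n u \<in> U"
  shows "generated_part U \<alpha> \<alpha> \<subseteq> U"
  unfolding generated_part_def using assms by (intro span_minimal) auto

lemma mode_generated_part:
  assumes U: "U \<subseteq> Vpart sc Vg \<alpha>" and z: "z \<in> Vpart sc Vg \<gamma>"
    and y: "y \<in> generated_part U \<alpha> a"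
  shows "mode z m y \<in> generated_part U \<alpha> (\<gamma> + a)"
proof -
  have "mode z m (mode x n u) \<in> generated_part U \<alpha> (\<gamma> + a)"
    if x: "x \<in> Vpart sc Vg (a - \<alpha>)" and "u \<in> U" for x n u
  proof (rule mode_mode_in_subspace[OF subspace_generated_part z x])
    show "u \<in> Vpart sc Vg \<alpha>" using \<open>u \<in> U\<close> U by blast
    show "mode y q u \<in> generated_part U \<alpha> (\<gamma> + a)" if "y \<in> Vpart sc Vg (\<gamma> + (a - \<alpha>))" for y q
      using that \<open>u \<in> U\<close> unfolding generated_part_def
      by (intro span_base) (auto simp: add_diff_eq)
  qed
  then have "generated_part U \<alpha> a \<subseteq> {y. mode z m y \<in> generated_part U \<alpha> (\<gamma> + a)}"
    unfolding generated_part_def[of U \<alpha> a]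
    by (intro span_minimal subspace_mode_right subspace_generated_part) auto
  then show ?thesis using y by blast
qed

lemma generated_part_subset_generated_submodule:
  "generated_part U \<alpha> a \<subseteq> generated_submodule U \<alpha>"
  unfolding generated_submodule_def by (rule order_trans[OF _ span_superset]) blast

lemma A_graded_generated_submodule:
  assumes "U \<subseteq> Vpart sc Vg \<alpha>"
  shows "A_graded_subspace sc Vg (generated_submodule U \<alpha>)"
  unfolding A_graded_subspace_def
proof (intro conjI ballI)
  show "subspace (generated_submodule U \<alpha>)"
    unfolding generated_submodule_def by simp
  fix w assume "w \<in> generated_submodule U \<alpha>"
  then obtain I g where I: "finite I" "\<forall>a\<in>I. g a \<in> generated_part U \<alpha> a" and w: "w = sum g I"
    unfolding generated_submodule_def span_UN_subspaces[OF subspace_generated_part] by blast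
  have "\<forall>a\<in>I. g a \<in> generated_submodule U \<alpha> \<inter> Vpart sc Vg a"
    using I(2) generated_part_subset_generated_submodule generated_part_subset_Vpart[OF assms]
    by blast
  with I(1) w show "\<exists>I u. finite I \<and> (\<forall>a\<in>I. u a \<in> generated_submodule U \<alpha> \<inter> Vpart sc Vg a)
      \<and> w = sum u I"
    by blast
qed

lemma mode_generated_submodule:
  assumes U: "U \<subseteq> Vpart sc Vg \<alpha>" and w: "w \<in> generated_submodule U \<alpha>"
  shows "mode v n w \<in> generated_submodule U \<alpha>"
proof -
  have "mode z n w \<in> generated_submodule U \<alpha>" if z: "z \<in> Vpart sc Vg \<gamma>" for z \<gamma>
  proof -
    have "generated_part U \<alpha> a \<subseteq> {w. mode z n w \<in> generated_submodule U \<alpha>}" for a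
      using mode_generated_part[OF U z] generated_part_subset_generated_submodule by blast
    then have "generated_submodule U \<alpha> \<subseteq> {w. mode z n w \<in> generated_submodule U \<alpha>}"
      unfolding generated_submodule_def[of U \<alpha>]
      by (intro span_minimal subspace_mode_right) (auto simp: generated_submodule_def)
    then show ?thesis using w by blast
  qed
  then have "span (\<Union>\<gamma>. Vpart sc Vg \<gamma>) \<subseteq> {v. mode v n w \<in> generated_submodule U \<alpha>}"
    by (intro span_minimal subspace_mode_left) (auto simp: generated_submodule_def)
  then show ?thesis unfolding span_Vpart_eq_UNIV by blast
qed

lemma nonzero_V0_submodule_eq_Vpart:
  assumes simple: "simple_AIA sc Vg mode"
    and U: "subspace U" "U \<subseteq> Vpart sc Vg \<alpha>" "U \<noteq> {0}"
    and closed: "\<forall>v\<in>Vpart sc Vg 0. \<forall>n. \<forall>u\<in>U. mode v n u \<in> U"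
  shows "U = Vpart sc Vg \<alpha>"
proof
  have "U \<subseteq> generated_submodule U \<alpha>"
    using subset_generated_part_self generated_part_subset_generated_submodule by (rule order_trans)
  then have "generated_submodule U \<alpha> \<noteq> {0}"
    using U(1,3) subspace_0 by blast
  then have W: "generated_submodule U \<alpha> = UNIV"
    using simple A_graded_generated_submodule[OF U(2)] mode_generated_submodule[OF U(2)]
    unfolding simple_AIA_def by blast
  show "Vpart sc Vg \<alpha> \<subseteq> U"
  proof
    fix y assume y: "y \<in> Vpart sc Vg \<alpha>"
    have "y \<in> generated_submodule U \<alpha>" using W by simp
    then obtain I g where I: "finite I" "\<forall>a\<in>I. g a \<in> generated_part U \<alpha> a" and "y = sum g I"
      unfolding generated_submodule_def span_UN_subspaces[OF subspace_generated_part] by blast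
    then have "y = (if \<alpha> \<in> I then g \<alpha> else 0)"
      using Vpart_component[of I g \<alpha>] generated_part_subset_Vpart[OF U(2)] y by blast
    also have "\<dots> \<in> U"
      using I(2) generated_part_self_subset[OF U(1) closed] subspace_0[OF U(1)] by auto
    finally show "y \<in> U" .
  qed
qed (rule U(2))

end

theorem mainTheorem14:
  fixes sc :: "complex \<Rightarrow> 'v::ab_group_add \<Rightarrow> 'v"
    and Vg :: "'a::ab_group_add \<Rightarrow> complex \<Rightarrow> 'v set"
    and mode :: "'v \<Rightarrow> complex \<Rightarrow> 'v \<Rightarrow> 'v"
    and vac \<omega> :: 'v
    and F :: "'a \<Rightarrow> 'a \<Rightarrow> 'a \<Rightarrow> complex"
    and \<Omega> bhat :: "'a \<Rightarrow> 'a \<Rightarrow> complex"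
  assumes "abelian_intertwining_algebra sc Vg mode vac \<omega> F \<Omega> bhat"
    and "simple_AIA sc Vg mode"
  shows "\<forall>a. simple_V0_module sc Vg mode a"
proof -
  interpret intertwining_algebra sc Vg mode vac \<omega> F \<Omega> bhat
    by (rule intertwining_algebra.intro) (fact assms(1))
  show ?thesis
    unfolding simple_V0_module_def using nonzero_V0_submodule_eq_Vpart[OF assms(2)] by blast
qed

end
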